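(* Let $C'$, $S$, $\widehat C$ be as in the context. Then \[ \ell(\widehat C)=\ell(C')+\hat N-\check N . \]
   Context: A column is a finite sequence of entries listed top to bottom; for a sequence $C$, $\ell(C)$ is the number of pairs $i<j$ with $C(i)>C(j)$. $C'=(C'(1),\ldots,C'(c'))$ is a sequence of distinct positive integers and $S$ is a set of $c$ positive integers, $c\in\{c',c'+1\}$, such that with $s_1<\cdots<s_c$ the elements of $S$ and $t_1<\cdots<t_{c'}$ the entries of $C'$ sorted, $s_r\le t_r$ for $r\le c'$. The column $\widehat C$ of length $c$ is built as follows: every $x\in S\cap C'$ is placed in the row where $x$ occurs in $C'$; if $c=c'+1$, the largest element of $S\setminus C'$ is placed in row $c$; the remaining elements of $S\setminus C'$, in decreasing order, are placed in the rows occupied in $C'$ by the elements of $C'\setminus S$, in decreasing order (the $k$-th largest next to the $k$-th largest). Pivots: row $r$ is a pivot row if either $r\le c'$ and $\widehat C(r)<C'(r)$, or $r=c'+1\le c$. With pivot rows $q_1,\ldots,q_p$, put $b_j=\widehat C(q_j)$, $d_j=C'(q_j)$ if $q_j\le c'$ and $d_j=\infty$ otherwise. Define $\check N=\sum_{j=1}^p\#\{r>q_j,\ r\le c':\ C'(r)\in S,\ b_j<C'(r)<d_j\}$ and $\hat N=\sum_{j=1}^p\#\{r<q_j:\ C'(r)\in S,\ b_j<C'(r)<d_j\}$. *)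

theory Defs
  imports Main
begin

text \<open>Columns are lists; row r (1-based in the paper) is list index r-1 here.\<close>

definition inv_count :: "nat list \<Rightarrow> nat" where
  "inv_count C = card {(i, j). i < j \<and> j < length C \<and> C ! j < C ! i}"

definition admissible :: "nat list \<Rightarrow> nat set \<Rightarrow> bool" where
  "admissible C' S \<longleftrightarrow>
     distinct C' \<and> (\<forall>x\<in>set C'. 0 < x) \<and> finite S \<and> (\<forall>x\<in>S. 0 < x) \<and>
     (card S = length C' \<or> card S = length C' + 1) \<and>
     (\<forall>r < length C'. sorted_list_of_set S ! r \<le> sort C' ! r)"

text \<open>Elements of S - C' that fill the rows of C' - S (excluding the largest
  element of S - C' when c = c'+1).\<close>
definition fill_set :: "nat list \<Rightarrow> nat set \<Rightarrow> nat set" where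
  "fill_set C' S = (if card S = length C' + 1 then (S - set C') - {Max (S - set C')}
                    else S - set C')"

definition hat_entry :: "nat list \<Rightarrow> nat set \<Rightarrow> nat \<Rightarrow> nat" where
  "hat_entry C' S r =
     (if r < length C' then
        (if C' ! r \<in> S then C' ! r
         else rev (sorted_list_of_set (fill_set C' S)) ! card {y \<in> set C' - S. C' ! r < y})
      else Max (S - set C'))"

definition hatC :: "nat list \<Rightarrow> nat set \<Rightarrow> nat list" where
  "hatC C' S = map (hat_entry C' S) [0..<card S]"

definition pivots :: "nat list \<Rightarrow> nat set \<Rightarrow> nat set" where
  "pivots C' S = {q. (q < length C' \<and> hatC C' S ! q < C' ! q) \<or>
                      (q = length C' \<and> length C' < card S)}"

text \<open>Condition b_j < C'(r) < d_j, with d_j = infinity for the pivot row c'+1.\<close>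
definition between :: "nat list \<Rightarrow> nat set \<Rightarrow> nat \<Rightarrow> nat \<Rightarrow> bool" where
  "between C' S q r \<longleftrightarrow> hatC C' S ! q < C' ! r \<and> (q < length C' \<longrightarrow> C' ! r < C' ! q)"

definition Ncheck :: "nat list \<Rightarrow> nat set \<Rightarrow> nat" where
  "Ncheck C' S = (\<Sum>q\<in>pivots C' S.
      card {r. q < r \<and> r < length C' \<and> C' ! r \<in> S \<and> between C' S q r})"

definition Nhat :: "nat list \<Rightarrow> nat set \<Rightarrow> nat" where
  "Nhat C' S = (\<Sum>q\<in>pivots C' S.
      card {r. r < q \<and> C' ! r \<in> S \<and> between C' S q r})"

end

theory Submission
  imports Defs
begin

text \<open>Rows whose entry lies in \<open>S\<close> keep it; the other rows of \<open>C'\<close> receive the elements of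
  \<open>S - C'\<close> in an order-preserving way. Comparing the number of elements above a level
  \<open>x = C'(r)\<close> in \<open>S\<close> and in \<open>C'\<close>, the dominance \<open>s\<^sub>r \<le> t\<^sub>r\<close> shows that each such entry
  strictly decreases, so these rows are exactly the pivots in \<open>C'\<close>. For rows \<open>i < j\<close> the
  inversion status therefore only changes when exactly one of them, a pivot \<open>q\<close>, was
  replaced, and the entry of the other row \<open>r\<close> lies strictly between the new and the old entry
  of \<open>q\<close>: an inversion is gained if \<open>r < q\<close> and lost if \<open>r > q\<close>. A new last row carries the
  largest element of \<open>S - C'\<close>, which exceeds all other new entries, so it forms an inversion
  exactly with the kept rows whose entries exceed it.\<close>

lemma card_lessThan_filter_eq_sum:
  fixes j :: nat
  shows "int (card {i. i < j \<and> P i}) = (\<Sum>i<j. of_bool (P i))"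
proof -
  have "{i. i < j \<and> P i} = {..<j} \<inter> {i. P i}"
    by auto
  then show ?thesis
    by simp
qed

lemma card_greaterThanLessThan_filter_eq_sum:
  fixes q :: nat
  shows "int (card {r. q < r \<and> r < m \<and> P r}) = (\<Sum>r\<in>{q<..<m}. of_bool (P r))"
proof -
  have "{r. q < r \<and> r < m \<and> P r} = {q<..<m} \<inter> {r. P r}"
    by auto
  then show ?thesis
    by simp
qed

lemma card_pairs_eq_sum:
  fixes m :: nat
  shows "int (card {(i, j). i < j \<and> j < m \<and> P i j}) = (\<Sum>j<m. \<Sum>i<j. of_bool (P i j))"
proof -
  have "{(i, j). i < j \<and> j < m \<and> P i j} = prod.swap ` (SIGMA j:{..<m}. {i. i < j \<and> P i j})"
    by auto
  then have "card {(i, j). i < j \<and> j < m \<and> P i j} = (\<Sum>j<m. card {i. i < j \<and> P i j})"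
    by (simp add: card_image card_SigmaI)
  then show ?thesis
    by (simp add: card_lessThan_filter_eq_sum)
qed

lemma inv_count_eq_sum:
  "int (inv_count xs) = (\<Sum>j<length xs. \<Sum>i<j. of_bool (xs ! j < xs ! i))"
  unfolding inv_count_def by (rule card_pairs_eq_sum)

lemma sum_upper_triangle_swap:
  fixes f :: "nat \<Rightarrow> nat \<Rightarrow> 'a::comm_monoid_add"
  shows "(\<Sum>q<m. \<Sum>r\<in>{q<..<m}. f q r) = (\<Sum>r<m. \<Sum>q<r. f q r)"
proof -
  have "(\<Sum>q<m. \<Sum>r\<in>{r. r \<in> {..<m} \<and> q < r}. f q r) = (\<Sum>r<m. \<Sum>q\<in>{q. q \<in> {..<m} \<and> q < r}. f q r)"
    by (rule sum.swap_restrict) auto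
  moreover have "{r. r \<in> {..<m} \<and> q < r} = {q<..<m}" for q
    by auto
  moreover have "{q. q \<in> {..<m} \<and> q < r} = {..<r}" if "r < m" for r
    using that by auto
  ultimately show ?thesis
    by simp
qed

lemma card_filter_le_mono_of_nth_le:
  fixes xs ys :: "'a::linorder list"
  assumes "distinct xs" "distinct ys" "length xs \<le> length ys"
    and "\<And>r. r < length xs \<Longrightarrow> ys ! r \<le> xs ! r"
  shows "card {t \<in> set xs. t \<le> x} \<le> card {s \<in> set ys. s \<le> x}"
proof -
  let ?I = "{r. r < length xs \<and> xs ! r \<le> x}"
  have "{t \<in> set xs. t \<le> x} = (!) xs ` ?I"
    by (auto simp: in_set_conv_nth)
  then have "card {t \<in> set xs. t \<le> x} = card ?I"
    using assms(1) by (simp add: card_image inj_on_nth)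
  also have "\<dots> = card ((!) ys ` ?I)"
    using assms(2,3) by (simp add: card_image inj_on_nth)
  also have "\<dots> \<le> card {s \<in> set ys. s \<le> x}"
    using assms(3,4) by (intro card_mono) (auto intro: order_trans)
  finally show ?thesis .
qed

lemma card_filter_greater_le_of_nth_le:
  fixes xs ys :: "'a::linorder list"
  assumes "distinct xs" "distinct ys" "length xs \<le> length ys"
    and "\<And>r. r < length xs \<Longrightarrow> ys ! r \<le> xs ! r"
  shows "card {s \<in> set ys. x < s} \<le> card {t \<in> set xs. x < t} + (length ys - length xs)"
proof -
  have split: "card (set zs) = card {t \<in> set zs. t \<le> x} + card {t \<in> set zs. x < t}" for zs :: "'a list"
    by (subst card_Un_disjoint[symmetric]) (auto intro: arg_cong[where f = card])
  show ?thesis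
    using split[of xs] split[of ys] card_filter_le_mono_of_nth_le[OF assms, of x] assms(1-3)
    by (simp add: distinct_card)
qed

lemma card_filter_Int_Diff:
  assumes "finite A"
  shows "card {a \<in> A. P a} = card {a \<in> A \<inter> B. P a} + card {a \<in> A - B. P a}"
proof -
  have "{a \<in> A. P a} \<inter> B = {a \<in> A \<inter> B. P a}" "{a \<in> A. P a} - B = {a \<in> A - B. P a}"
    by auto
  then show ?thesis
    using card_Int_Diff[of "{a \<in> A. P a}" B] assms by simp
qed

locale admissible_column =
  fixes C' :: "nat list" and S :: "nat set"
  assumes admissible: "admissible C' S"
begin

abbreviation "n \<equiv> length C'"
abbreviation "c \<equiv> card S"
abbreviation "removed \<equiv> set C' - S"
abbreviation "added \<equiv> S - set C'"
abbreviation "fill \<equiv> rev (sorted_list_of_set (fill_set C' S))"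
abbreviation "Chat \<equiv> hatC C' S"

definition rank :: "nat \<Rightarrow> nat" where
  "rank r = card {y \<in> removed. C' ! r < y}"

lemma distinct_C': "distinct C'"
  and finite_S: "finite S"
  and card_S_cases: "c = n \<or> c = n + 1"
  and dominated: "r < n \<Longrightarrow> sorted_list_of_set S ! r \<le> sort C' ! r"
  using admissible unfolding admissible_def by auto

lemma length_le_card: "n \<le> c"
  using card_S_cases by linarith

lemma card_added: "card added = card removed + (c - n)"
proof -
  have "c = card (set C' \<inter> S) + card added"
    using card_Int_Diff[OF finite_S, of "set C'"] by (simp add: Int_commute)
  moreover have "n = card (set C' \<inter> S) + card removed"
    using card_Int_Diff[of "set C'" S] distinct_C' by (simp add: distinct_card)
  ultimately show ?thesis
    using length_le_card by linarith
qed

lemma added_minus_fill_set: "added - fill_set C' S = (if c = n + 1 then {Max added} else {})"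
proof -
  have "added \<noteq> {}" if "c = n + 1"
  proof -
    have "card added \<noteq> 0"
      using card_added that by simp
    then show ?thesis
      by (metis card.empty)
  qed
  then show ?thesis
    using finite_S Max_in unfolding fill_set_def by auto
qed

lemma fill_set_subset: "fill_set C' S \<subseteq> added"
  unfolding fill_set_def by auto

lemma card_fill_set: "card (fill_set C' S) = card removed"
proof -
  have "card added = card (fill_set C' S) + card (added - fill_set C' S)"
    using card_Int_Diff[of added "fill_set C' S"] finite_S fill_set_subset
    by (simp add: Int_absorb1)
  then show ?thesis
    using card_added added_minus_fill_set card_S_cases by (auto split: if_splits)
qed

lemma fill_set_less_Max: "c = n + 1 \<Longrightarrow> b \<in> fill_set C' S \<Longrightarrow> b < Max added"
  using finite_S unfolding fill_set_def by (auto simp: order.strict_iff_order)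

lemma length_fill: "length fill = card removed"
  and set_fill: "set fill = fill_set C' S"
  and fill_decreasing: "sorted_wrt (>) fill"
  using finite_subset[OF fill_set_subset] finite_S card_fill_set
  by (simp_all add: sorted_wrt_rev strict_sorted_iff)

lemma rank_less:
  assumes "r < n" "C' ! r \<notin> S"
  shows "rank r < card removed"
proof -
  have "rank r \<le> card (removed - {C' ! r})"
    unfolding rank_def by (intro card_mono) auto
  also have "\<dots> < card removed"
    using assms by (intro card_Diff1_less) auto
  finally show ?thesis .
qed

lemma rank_strict_antimono:
  assumes "j < n" "C' ! j \<notin> S" "C' ! i < C' ! j"
  shows "rank j < rank i"
proof -
  have "rank j \<le> card ({y \<in> removed. C' ! i < y} - {C' ! j})"
    unfolding rank_def using assms(3) by (intro card_mono) auto
  also have "\<dots> < rank i"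
    unfolding rank_def using assms by (intro card_Diff1_less) auto
  finally show ?thesis .
qed

lemma length_Chat: "length Chat = c"
  unfolding hatC_def by simp

lemma Chat_fixed: "r < n \<Longrightarrow> C' ! r \<in> S \<Longrightarrow> Chat ! r = C' ! r"
  using length_le_card by (simp add: hatC_def hat_entry_def)

lemma Chat_moved: "r < n \<Longrightarrow> C' ! r \<notin> S \<Longrightarrow> Chat ! r = fill ! rank r"
  using length_le_card by (simp add: hatC_def hat_entry_def rank_def)

lemma Chat_moved_in_fill_set: "r < n \<Longrightarrow> C' ! r \<notin> S \<Longrightarrow> Chat ! r \<in> fill_set C' S"
  using Chat_moved rank_less length_fill set_fill nth_mem by metis

lemma Chat_last: "c = n + 1 \<Longrightarrow> Chat ! n = Max added"
  by (simp add: hatC_def hat_entry_def nth_append)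

lemma sort_C': "sort C' = sorted_list_of_set (set C')"
  using distinct_C' by (simp add: sorted_list_of_set_sort_remdups distinct_remdups_id)

lemma card_greater_added_le: "card {s \<in> added. x < s} \<le> card {t \<in> removed. x < t} + (c - n)"
proof -
  have "card {s \<in> S. x < s} \<le> card {t \<in> set C'. x < t} + (c - n)"
    using card_filter_greater_le_of_nth_le[of "sort C'" "sorted_list_of_set S" x]
      distinct_C' finite_S length_le_card dominated
    by (simp add: sort_C' distinct_card)
  then show ?thesis
    using card_filter_Int_Diff[of S "\<lambda>s. x < s" "set C'"]
      card_filter_Int_Diff[of "set C'" "\<lambda>s. x < s" S] finite_S
    by (simp add: Int_commute)
qed

lemma Chat_moved_ne:
  "r < n \<Longrightarrow> C' ! r \<notin> S \<Longrightarrow> s < n \<Longrightarrow> Chat ! r \<noteq> C' ! s"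
  using Chat_moved_in_fill_set fill_set_subset by fastforce

lemma card_added_atLeast_fill_nth:
  assumes k: "k < length fill"
  shows "Suc k + (c - n) \<le> card {s \<in> added. fill ! k \<le> s}"
proof -
  have fill_nth_in: "fill ! i \<in> fill_set C' S" if "i \<le> k" for i
    using that k set_fill nth_mem by (metis le_less_trans)
  have fill_nth_ge: "fill ! k \<le> fill ! i" if "i \<le> k" for i
    using that k sorted_wrt_nth_less[OF fill_decreasing, of i k] by (cases "i = k") auto
  let ?T = "(!) fill ` {..k} \<union> (added - fill_set C' S)"
  have "card ?T = Suc k + (c - n)"
  proof -
    have "card ((!) fill ` {..k}) = Suc k"
      using k by (simp add: card_image inj_on_nth)
    moreover have "card (added - fill_set C' S) = c - n"
      using added_minus_fill_set card_S_cases by auto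
    moreover have "(!) fill ` {..k} \<inter> (added - fill_set C' S) = {}"
      using fill_nth_in by blast
    ultimately show ?thesis
      using finite_S by (simp add: card_Un_disjoint)
  qed
  moreover have "?T \<subseteq> {s \<in> added. fill ! k \<le> s}"
  proof -
    have "fill ! k \<le> Max added"
      using fill_nth_in[of k] fill_set_subset finite_S by auto
    then show ?thesis
      using fill_nth_in fill_nth_ge fill_set_subset added_minus_fill_set by auto
  qed
  then have "card ?T \<le> card {s \<in> added. fill ! k \<le> s}"
    using finite_S by (intro card_mono) auto
  ultimately show ?thesis
    by simp
qed

lemma Chat_moved_less:
  assumes r: "r < n" "C' ! r \<notin> S"
  shows "Chat ! r < C' ! r"
proof (rule ccontr)
  define k where "k = rank r"
  have k: "k < length fill"
    using rank_less[OF r] length_fill k_def by simp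
  assume "\<not> Chat ! r < C' ! r"
  then have "C' ! r < fill ! k"
    using Chat_moved[OF r] Chat_moved_ne[OF r r(1)] k_def by simp
  then have "card {s \<in> added. fill ! k \<le> s} \<le> card {s \<in> added. C' ! r < s}"
    using finite_S by (intro card_mono) auto
  then show False
    using card_added_atLeast_fill_nth[OF k] card_greater_added_le[of "C' ! r"]
    unfolding k_def rank_def by simp
qed

lemma Chat_moved_strict_mono:
  assumes "i < n" "j < n" "C' ! i \<notin> S" "C' ! j \<notin> S" "C' ! i < C' ! j"
  shows "Chat ! i < Chat ! j"
proof -
  have "rank j < rank i" "rank i < length fill"
    using assms rank_strict_antimono rank_less length_fill by auto
  then show ?thesis
    using assms Chat_moved sorted_wrt_nth_less[OF fill_decreasing] by simp
qed

lemma pivots_eq: "pivots C' S = {q. q < n \<and> C' ! q \<notin> S} \<union> {q. q = n \<and> n < c}"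
  using Chat_moved_less Chat_fixed unfolding pivots_def by fastforce

lemma sum_pivots:
  "(\<Sum>q\<in>pivots C' S. f q) = (\<Sum>q<n. if C' ! q \<notin> S then f q else 0) + (if n < c then f n else 0)"
proof -
  have "(\<Sum>q\<in>pivots C' S. f q) = (\<Sum>q\<in>{q \<in> {..<n}. C' ! q \<notin> S}. f q) + (\<Sum>q\<in>{q. q = n \<and> n < c}. f q)"
    unfolding pivots_eq by (subst sum.union_disjoint) (auto intro: arg_cong2[where f = "(+)"])
  moreover have "(\<Sum>q\<in>{q \<in> {..<n}. C' ! q \<notin> S}. f q) = (\<Sum>q<n. if C' ! q \<notin> S then f q else 0)"
    by (rule sum.inter_filter) simp
  moreover have "{q. q = n \<and> n < c} = (if n < c then {n} else {})"
    by auto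
  ultimately show ?thesis
    by simp
qed

definition crossing :: "nat \<Rightarrow> nat \<Rightarrow> bool" where
  "crossing q r \<longleftrightarrow> C' ! q \<notin> S \<and> C' ! r \<in> S \<and> between C' S q r"

lemma inversion_Chat_pair:
  assumes ij: "i < j" "j < n"
  shows "(of_bool (Chat ! j < Chat ! i) :: int)
    = of_bool (C' ! j < C' ! i) + of_bool (crossing j i) - of_bool (crossing i j)"
proof -
  have i: "i < n"
    using ij by simp
  have ne: "C' ! i \<noteq> C' ! j"
    using distinct_C' ij by (simp add: nth_eq_iff_index_eq)
  then consider
      "C' ! i \<in> S" "C' ! j \<in> S"
    | "C' ! i \<in> S" "C' ! j \<notin> S"
    | "C' ! i \<notin> S" "C' ! j \<in> S"
    | "C' ! i \<notin> S" "C' ! j \<notin> S" "C' ! i < C' ! j"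
    | "C' ! i \<notin> S" "C' ! j \<notin> S" "C' ! j < C' ! i"
    by (meson linorder_neqE_nat)
  then show ?thesis
  proof cases
    case 1
    then show ?thesis
      using Chat_fixed i ij by (simp add: crossing_def)
  next
    case 2
    then show ?thesis
      using Chat_fixed[OF i] Chat_moved_less[OF ij(2)] Chat_moved_ne[OF ij(2) _ i] ij ne
      by (auto simp: crossing_def between_def)
  next
    case 3
    then show ?thesis
      using Chat_fixed[OF ij(2)] Chat_moved_less[OF i] Chat_moved_ne[OF i _ ij(2)] i ne
      by (auto simp: crossing_def between_def)
  next
    case 4
    then show ?thesis
      using Chat_moved_strict_mono[OF i ij(2)] by (simp add: crossing_def)
  next
    case 5
    then show ?thesis
      using Chat_moved_strict_mono[OF ij(2) i] by (simp add: crossing_def)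
  qed
qed

lemma inversion_Chat_last:
  assumes "c = n + 1" "i < n"
  shows "Chat ! n < Chat ! i \<longleftrightarrow> C' ! i \<in> S \<and> Chat ! n < C' ! i"
proof (cases "C' ! i \<in> S")
  case True
  then show ?thesis
    using Chat_fixed assms by simp
next
  case False
  then show ?thesis
    using fill_set_less_Max[OF assms(1) Chat_moved_in_fill_set[OF assms(2) False]] Chat_last assms
    by simp
qed

lemma Nhat_eq:
  "int (Nhat C' S) = (\<Sum>q<n. \<Sum>r<q. of_bool (crossing q r))
     + (if n < c then \<Sum>r<n. of_bool (C' ! r \<in> S \<and> Chat ! n < C' ! r) else 0)"
proof -
  have "int (Nhat C' S) = (\<Sum>q\<in>pivots C' S. \<Sum>r<q. of_bool (C' ! r \<in> S \<and> between C' S q r))"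
    unfolding Nhat_def of_nat_sum card_lessThan_filter_eq_sum ..
  then show ?thesis
    unfolding sum_pivots
    by (auto simp del: sum_of_bool_eq simp: crossing_def between_def intro!: sum.cong)
qed

lemma Ncheck_eq: "int (Ncheck C' S) = (\<Sum>r<n. \<Sum>q<r. of_bool (crossing q r))"
proof -
  have "int (Ncheck C' S) = (\<Sum>q\<in>pivots C' S. \<Sum>r\<in>{q<..<n}. of_bool (C' ! r \<in> S \<and> between C' S q r))"
    unfolding Ncheck_def of_nat_sum card_greaterThanLessThan_filter_eq_sum ..
  also have "\<dots> = (\<Sum>q<n. \<Sum>r\<in>{q<..<n}. of_bool (crossing q r))"
    unfolding sum_pivots
    by (auto simp del: sum_of_bool_eq simp: crossing_def intro!: sum.cong)
  finally show ?thesis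
    by (simp only: sum_upper_triangle_swap)
qed

lemma inv_count_Chat_eq_sum:
  "int (inv_count Chat) = (\<Sum>j<n. \<Sum>i<j. of_bool (Chat ! j < Chat ! i))
     + (if n < c then \<Sum>i<n. of_bool (Chat ! n < Chat ! i) else 0)"
  using card_S_cases by (auto simp: inv_count_eq_sum length_Chat)

theorem inv_count_hatC:
  "int (inv_count Chat) = int (inv_count C') + int (Nhat C' S) - int (Ncheck C' S)"
proof -
  have "(\<Sum>j<n. \<Sum>i<j. of_bool (Chat ! j < Chat ! i))
      = (\<Sum>j<n. \<Sum>i<j. of_bool (C' ! j < C' ! i) + of_bool (crossing j i) - of_bool (crossing i j) :: int)"
    by (intro sum.cong refl) (simp add: inversion_Chat_pair)
  also have "\<dots> = int (inv_count C') + (\<Sum>j<n. \<Sum>i<j. of_bool (crossing j i))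
      - (\<Sum>j<n. \<Sum>i<j. of_bool (crossing i j))"
    by (simp del: sum_of_bool_eq add: inv_count_eq_sum sum.distrib sum_subtractf)
  finally have rows_of_C': "(\<Sum>j<n. \<Sum>i<j. of_bool (Chat ! j < Chat ! i)) = \<dots>" .
  have "(\<Sum>i<n. of_bool (Chat ! n < Chat ! i))
      = (\<Sum>r<n. of_bool (C' ! r \<in> S \<and> Chat ! n < C' ! r) :: int)" if "n < c"
    using inversion_Chat_last card_S_cases that by (intro sum.cong) auto
  with rows_of_C' show ?thesis
    unfolding inv_count_Chat_eq_sum Nhat_eq Ncheck_eq by simp
qed

end

theorem lemma4p8:
  fixes C' :: "nat list" and S :: "nat set"
  assumes "admissible C' S"
  shows "int (inv_count (hatC C' S)) = int (inv_count C') + int (Nhat C' S) - int (Ncheck C' S)"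
proof -
  interpret admissible_column C' S
    using assms by unfold_locales
  show ?thesis
    by (rule inv_count_hatC)
qed

end
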